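(* For all $s\in[0,1]$ and $t\in\mathbb N^*$, $$P[s^{|B_t|}]\le Q\big[\hat q_{0,0}\circ\hat q_{1,0}\circ\cdots\circ\hat q_{t-1,0}(s)\big].$$
   Context: BRWRE on $\mathbb Z^d$, with $\mathbb N=\{0,1,\dots\}$ and $\mathbb N^*=\{1,2,\dots\}$. The environment $\mathbf q=(q_{t,x})_{(t,x)\in\mathbb N\times\mathbb Z^d}$ consists of probability measures on $\mathbb N$, i.i.d. under $Q$. Given $\mathbf q$, under $P^{\mathbf q}$ one particle starts at the origin at time $0$. A particle at $(t,x)$ jumps to a uniformly chosen nearest neighbour of $x$ and there dies, leaving $k$ children with probability $q_{t,x}(k)$; all independently. $B_t$ is the set of particles at time $t$, and $P=\int Q(d\mathbf q)P^{\mathbf q}$. For a probability measure $q$ on $\mathbb N$, $\hat q(s)=\sum_{k\ge0}s^kq(k)$ (with $0^0=1$). *)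

theory Defs
  imports "HOL-Probability.Probability"
begin

text \<open>Sites of the lattice Z^d are vectors int^'d with 'd a finite index type (d = CARD('d) >= 1).
  An environment assigns to each space-time point (t,x) an offspring law q_{t,x} :: nat pmf.\<close>

type_synonym 'd env = "nat \<times> (int ^ 'd) \<Rightarrow> nat pmf"

definition nbrs :: "int ^ 'd::finite \<Rightarrow> (int ^ 'd) set" where
  "nbrs x = {x + axis i 1 | i. True} \<union> {x - axis i 1 | i. True}"

text \<open>One time step of the quenched process: every particle of the current population
  (a list of positions) independently jumps to a uniform nearest neighbour y of its position x,
  dies there and is replaced by k particles at y, k distributed as q_{t,x}.\<close>

fun brw_step :: "'d::finite env \<Rightarrow> nat \<Rightarrow> (int ^ 'd) list \<Rightarrow> (int ^ 'd) list pmf" where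
  "brw_step q t [] = return_pmf []"
| "brw_step q t (x # xs) =
     bind_pmf (pmf_of_set (nbrs x)) (\<lambda>y.
     bind_pmf (q (t, x)) (\<lambda>k.
     bind_pmf (brw_step q t xs) (\<lambda>rest.
     return_pmf (replicate k y @ rest))))"

text \<open>Law under P^q of the population B_t (positions of the particles alive at time t),
  started from one particle at the origin at time 0.\<close>

fun brw :: "'d::finite env \<Rightarrow> nat \<Rightarrow> (int ^ 'd) list pmf" where
  "brw q 0 = return_pmf [0]"
| "brw q (Suc t) = bind_pmf (brw q t) (brw_step q t)"

definition brw_gf :: "'d::finite env \<Rightarrow> nat \<Rightarrow> real \<Rightarrow> real" where
  "brw_gf q t s = measure_pmf.expectation (brw q t) (\<lambda>xs. s ^ length xs)"

definition pgf :: "nat pmf \<Rightarrow> real \<Rightarrow> real" where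
  "pgf p s = (\<Sum>k. s ^ k * pmf p k)"

definition pgf_comp :: "'d::finite env \<Rightarrow> nat \<Rightarrow> real \<Rightarrow> real" where
  "pgf_comp q t s = foldr (\<lambda>i acc. pgf (q (i, 0)) acc) [0..<t] s"

end

theory Submission
  imports Defs
begin

text \<open>Let \<phi>(p) = pgf p s. Given the environment q, the generating function of |B_(t+1)| is the
  expectation of the product of \<phi>(q(t, x)) over the particles x of B_t. Layer t of the environment
  is independent of B_t and consists of i.i.d. laws, so by Chebyshev's association inequality
  E[\<phi>^a] E[\<phi>^b] \<le> E[\<phi>^(a+b)] the annealed expectation only grows when all these factors are
  taken at the site 0; this gives Q[P^q[\<phi>(q(t, 0))^|B_t|]]. As q(t, 0) is independent of the
  earlier layers, induction on t with s replaced by \<phi>(q(t, 0)) concludes.\<close>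

lemma prod_list_map_eq_prod_count:
  fixes f :: "'a \<Rightarrow> 'b::comm_monoid_mult"
  shows "(\<Prod>x\<leftarrow>xs. f x) = (\<Prod>x\<in>set xs. f x ^ count_list xs x)"
  unfolding prod_mset_prod_list[symmetric] mset_map image_prod_mset_multiplicity
  by (simp add: count_mset)

lemma borel_measurable_prod_list [measurable (raw)]:
  fixes f :: "'x \<Rightarrow> 'a \<Rightarrow> real"
  assumes "\<And>x. f x \<in> borel_measurable M"
  shows "(\<lambda>a. \<Prod>x\<leftarrow>xs. f x a) \<in> borel_measurable M"
  using assms by (induction xs) simp_all

section \<open>Products of probability spaces\<close>

lemma distr_merge_PiM:
  fixes M :: "'i \<Rightarrow> 'a measure"
  assumes M: "\<And>i. prob_space (M i)" and SR: "S \<inter> R = {}"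
  shows "distr (PiM S M \<Otimes>\<^sub>M PiM R M) (PiM (S \<union> R) M) (merge S R) = PiM (S \<union> R) M"
proof (rule measure_eqI_PiM_infinite[symmetric, OF refl])
  interpret S: prob_space "PiM S M" using M by (intro prob_space_PiM) auto
  interpret R: prob_space "PiM R M" using M by (intro prob_space_PiM) auto
  interpret SR: prob_space "PiM (S \<union> R) M" using M by (intro prob_space_PiM) auto
  show "finite_measure (PiM (S \<union> R) M)" by unfold_locales
  fix K A assume K: "finite K" "K \<subseteq> S \<union> R" and A: "\<And>i. i \<in> K \<Longrightarrow> A i \<in> sets (M i)"
  let ?X = "prod_emb (S \<union> R) M K (Pi\<^sub>E K A)"
  have "K = (K \<inter> S) \<union> (K \<inter> R)" using K by auto
  then have "PiM (S \<union> R) M ?X = (\<Prod>i\<in>K \<inter> S. M i (A i)) * (\<Prod>i\<in>K \<inter> R. M i (A i))"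
    using M K A SR by (simp add: emeasure_PiM_emb prod.union_disjoint[symmetric] disjoint_iff)
  also have "\<dots> = PiM S M (prod_emb S M (K \<inter> S) (Pi\<^sub>E (K \<inter> S) A))
      * PiM R M (prod_emb R M (K \<inter> R) (Pi\<^sub>E (K \<inter> R) A))"
    using M K A by (subst (1 2) emeasure_PiM_emb) auto
  also have "\<dots> = (PiM S M \<Otimes>\<^sub>M PiM R M)
      (prod_emb S M (K \<inter> S) (Pi\<^sub>E (K \<inter> S) A) \<times> prod_emb R M (K \<inter> R) (Pi\<^sub>E (K \<inter> R) A))"
    using K A by (intro R.emeasure_pair_measure_Times[symmetric] sets_PiM_I) (auto intro: finite_subset)
  also have "prod_emb S M (K \<inter> S) (Pi\<^sub>E (K \<inter> S) A) \<times> prod_emb R M (K \<inter> R) (Pi\<^sub>E (K \<inter> R) A)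
      = merge S R -` ?X \<inter> space (PiM S M \<Otimes>\<^sub>M PiM R M)"
    using K SR by (auto simp: prod_emb_def space_pair_measure space_PiM PiE_iff merge_def extensional_def;
        metis IntI disjoint_iff)+
  finally show "PiM (S \<union> R) M ?X = distr (PiM S M \<Otimes>\<^sub>M PiM R M) (PiM (S \<union> R) M) (merge S R) ?X"
    using K A by (subst emeasure_distr) (auto intro!: sets_PiM_I)
qed simp

lemma nn_integral_PiM_merge:
  fixes M :: "'i \<Rightarrow> 'a measure"
  assumes M: "\<And>i. prob_space (M i)" and SR: "S \<inter> R = {}" "S \<union> R = I"
    and f: "f \<in> borel_measurable (PiM I M)"
  shows "(\<integral>\<^sup>+\<omega>. f \<omega> \<partial>PiM I M) = (\<integral>\<^sup>+a. \<integral>\<^sup>+b. f (merge S R (a, b)) \<partial>PiM R M \<partial>PiM S M)"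
    and "(\<integral>\<^sup>+\<omega>. f \<omega> \<partial>PiM I M) = (\<integral>\<^sup>+b. \<integral>\<^sup>+a. f (merge S R (a, b)) \<partial>PiM S M \<partial>PiM R M)"
proof -
  interpret S: prob_space "PiM S M" using M by (intro prob_space_PiM) auto
  interpret R: prob_space "PiM R M" using M by (intro prob_space_PiM) auto
  interpret pair_prob_space "PiM S M" "PiM R M" by unfold_locales
  have merge: "merge S R \<in> PiM S M \<Otimes>\<^sub>M PiM R M \<rightarrow>\<^sub>M PiM I M"
    using measurable_merge[of S R M] SR(2) by simp
  have "(\<integral>\<^sup>+\<omega>. f \<omega> \<partial>PiM I M) = (\<integral>\<^sup>+\<omega>. f \<omega> \<partial>distr (PiM S M \<Otimes>\<^sub>M PiM R M) (PiM I M) (merge S R))"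
    using distr_merge_PiM[OF M SR(1)] SR(2) by simp
  also have "\<dots> = (\<integral>\<^sup>+p. f (merge S R p) \<partial>(PiM S M \<Otimes>\<^sub>M PiM R M))"
    using f by (intro nn_integral_distr merge) simp
  finally have pair: "(\<integral>\<^sup>+\<omega>. f \<omega> \<partial>PiM I M) = (\<integral>\<^sup>+p. f (merge S R p) \<partial>(PiM S M \<Otimes>\<^sub>M PiM R M))" .
  have fm: "(\<lambda>p. f (merge S R p)) \<in> borel_measurable (PiM S M \<Otimes>\<^sub>M PiM R M)"
    using measurable_comp[OF merge f] by (simp add: comp_def)
  show "(\<integral>\<^sup>+\<omega>. f \<omega> \<partial>PiM I M) = (\<integral>\<^sup>+a. \<integral>\<^sup>+b. f (merge S R (a, b)) \<partial>PiM R M \<partial>PiM S M)"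
    using pair R.nn_integral_fst[OF fm] by simp
  show "(\<integral>\<^sup>+\<omega>. f \<omega> \<partial>PiM I M) = (\<integral>\<^sup>+b. \<integral>\<^sup>+a. f (merge S R (a, b)) \<partial>PiM S M \<partial>PiM R M)"
    using pair nn_integral_snd[OF fm] by simp
qed

lemma nn_integral_PiM_merge_indep:
  fixes M :: "'i \<Rightarrow> 'a measure"
  assumes M: "\<And>i. prob_space (M i)" and SR: "S \<inter> R = {}" "S \<union> R = I"
    and f: "f \<in> borel_measurable (PiM I M)"
    and f_R: "\<And>\<omega> \<omega>'. (\<And>j. j \<in> R \<Longrightarrow> \<omega> j = \<omega>' j) \<Longrightarrow> f \<omega> = f \<omega>'"
  shows "(\<integral>\<^sup>+\<omega>. f \<omega> \<partial>PiM I M) = (\<integral>\<^sup>+b. f (merge S R (a, b)) \<partial>PiM R M)"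
proof -
  interpret S: prob_space "PiM S M" using M by (intro prob_space_PiM) auto
  define g where "g b = f (merge S R (a, b))" for b
  have "\<And>a' b. f (merge S R (a', b)) = g b"
    unfolding g_def using SR(1) by (intro f_R) (auto simp: merge_def)
  then show ?thesis
    unfolding nn_integral_PiM_merge(1)[OF M SR f] g_def[symmetric] by (simp add: S.emeasure_space_1)
qed

lemma nn_integral_PiM_mono_indep_param:
  fixes M :: "'i \<Rightarrow> 'a measure" and w :: "('i \<Rightarrow> 'a) \<Rightarrow> 'v"
  assumes M: "\<And>i. prob_space (M i)" and SR: "S \<inter> R = {}" "S \<union> R = I"
    and f_R: "\<And>\<omega> \<omega>' v. (\<And>j. j \<in> R \<Longrightarrow> \<omega> j = \<omega>' j) \<Longrightarrow> f \<omega> v = f \<omega>' v"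
    and g_R: "\<And>\<omega> \<omega>' v. (\<And>j. j \<in> R \<Longrightarrow> \<omega> j = \<omega>' j) \<Longrightarrow> g \<omega> v = g \<omega>' v"
    and w_S: "\<And>\<omega> \<omega>'. (\<And>j. j \<in> S \<Longrightarrow> \<omega> j = \<omega>' j) \<Longrightarrow> w \<omega> = w \<omega>'"
    and w: "\<And>\<omega>. w \<omega> \<in> W"
    and le: "\<And>v. v \<in> W \<Longrightarrow> (\<integral>\<^sup>+\<omega>. f \<omega> v \<partial>PiM I M) \<le> (\<integral>\<^sup>+\<omega>. g \<omega> v \<partial>PiM I M)"
    and f_meas: "(\<lambda>\<omega>. f \<omega> (w \<omega>)) \<in> borel_measurable (PiM I M)"
      "\<And>v. v \<in> W \<Longrightarrow> (\<lambda>\<omega>. f \<omega> v) \<in> borel_measurable (PiM I M)"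
    and g_meas: "(\<lambda>\<omega>. g \<omega> (w \<omega>)) \<in> borel_measurable (PiM I M)"
      "\<And>v. v \<in> W \<Longrightarrow> (\<lambda>\<omega>. g \<omega> v) \<in> borel_measurable (PiM I M)"
  shows "(\<integral>\<^sup>+\<omega>. f \<omega> (w \<omega>) \<partial>PiM I M) \<le> (\<integral>\<^sup>+\<omega>. g \<omega> (w \<omega>) \<partial>PiM I M)"
proof -
  define v where "v a = w (merge S R (a, undefined))" for a
  have w_merge: "w (merge S R (a, b)) = v a" for a b
    unfolding v_def using SR(1) by (intro w_S) (auto simp: merge_def)
  have "(\<integral>\<^sup>+\<omega>. f \<omega> (w \<omega>) \<partial>PiM I M) = (\<integral>\<^sup>+a. \<integral>\<^sup>+b. f (merge S R (a, b)) (v a) \<partial>PiM R M \<partial>PiM S M)"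
    by (simp add: nn_integral_PiM_merge(1)[OF M SR f_meas(1)] w_merge)
  also have "\<dots> \<le> (\<integral>\<^sup>+a. \<integral>\<^sup>+b. g (merge S R (a, b)) (v a) \<partial>PiM R M \<partial>PiM S M)"
  proof (rule nn_integral_mono)
    fix a
    have va: "v a \<in> W"
      unfolding v_def by (rule w)
    have "(\<integral>\<^sup>+b. f (merge S R (a, b)) (v a) \<partial>PiM R M) = (\<integral>\<^sup>+\<omega>. f \<omega> (v a) \<partial>PiM I M)"
      by (rule nn_integral_PiM_merge_indep[symmetric, OF M SR f_meas(2)[OF va] f_R])
    also have "\<dots> \<le> (\<integral>\<^sup>+\<omega>. g \<omega> (v a) \<partial>PiM I M)"
      using va by (rule le)
    also have "\<dots> = (\<integral>\<^sup>+b. g (merge S R (a, b)) (v a) \<partial>PiM R M)"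
      by (rule nn_integral_PiM_merge_indep[OF M SR g_meas(2)[OF va] g_R])
    finally show "(\<integral>\<^sup>+b. f (merge S R (a, b)) (v a) \<partial>PiM R M) \<le> (\<integral>\<^sup>+b. g (merge S R (a, b)) (v a) \<partial>PiM R M)" .
  qed
  also have "\<dots> = (\<integral>\<^sup>+\<omega>. g \<omega> (w \<omega>) \<partial>PiM I M)"
    by (simp add: nn_integral_PiM_merge(1)[OF M SR g_meas(1)] w_merge)
  finally show ?thesis .
qed

lemma nn_integral_PiM_prod:
  fixes M :: "'i \<Rightarrow> 'a measure"
  assumes M: "\<And>i. prob_space (M i)" and J: "finite J" "J \<subseteq> I"
    and f: "\<And>j. j \<in> J \<Longrightarrow> f j \<in> borel_measurable (M j)"
  shows "(\<integral>\<^sup>+\<omega>. (\<Prod>j\<in>J. f j (\<omega> j)) \<partial>PiM I M) = (\<Prod>j\<in>J. \<integral>\<^sup>+x. f j x \<partial>M j)"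
proof -
  interpret product_prob_space M I
    using M by (simp add: product_prob_space_def product_prob_space_axioms_def
        product_sigma_finite_def prob_space_imp_sigma_finite)
  have "(\<Prod>j\<in>J. \<integral>\<^sup>+x. f j x \<partial>M j) = (\<integral>\<^sup>+\<omega>. (\<Prod>j\<in>J. f j (\<omega> j)) \<partial>PiM J M)"
    using J f by (intro product_nn_integral_prod[symmetric]) auto
  also have "\<dots> = (\<integral>\<^sup>+\<omega>. (\<Prod>j\<in>J. f j (\<omega> j)) \<partial>distr (PiM I M) (PiM J M) (\<lambda>\<omega>. restrict \<omega> J))"
    using distr_PiM_restrict_finite[OF J] by simp
  also have "\<dots> = (\<integral>\<^sup>+\<omega>. (\<Prod>j\<in>J. f j (\<omega> j)) \<partial>PiM I M)"
    using J f by (subst nn_integral_distr) (auto intro!: measurable_restrict_subset nn_integral_cong prod.cong)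
  finally show ?thesis by simp
qed

lemma nn_integral_measure_pmf_swap:
  fixes G :: "'a \<Rightarrow> 'b::countable \<Rightarrow> ennreal"
  assumes N: "sigma_finite_measure N" and G: "\<And>x. (\<lambda>a. G a x) \<in> borel_measurable N"
  shows "(\<integral>\<^sup>+a. \<integral>\<^sup>+x. G a x \<partial>measure_pmf p \<partial>N) = (\<integral>\<^sup>+x. \<integral>\<^sup>+a. G a x \<partial>N \<partial>measure_pmf p)"
proof -
  interpret N: sigma_finite_measure N by fact
  interpret pair_sigma_finite "count_space (UNIV :: 'b set)" N
    by (intro pair_sigma_finite.intro sigma_finite_measure_count_space N)
  have m: "(\<lambda>(x, a). ennreal (pmf p x) * G a x) \<in> borel_measurable (count_space UNIV \<Otimes>\<^sub>M N)"
  proof (rule measurable_pair_measure_countable1)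
    show "(\<lambda>a. case (x, a) of (x, a) \<Rightarrow> ennreal (pmf p x) * G a x) \<in> borel_measurable N" for x
      using G[of x] by simp
  qed simp
  have "(\<integral>\<^sup>+a. \<integral>\<^sup>+x. G a x \<partial>measure_pmf p \<partial>N)
      = (\<integral>\<^sup>+a. \<integral>\<^sup>+x. ennreal (pmf p x) * G a x \<partial>count_space UNIV \<partial>N)"
    by (simp add: nn_integral_measure_pmf)
  also have "\<dots> = (\<integral>\<^sup>+x. \<integral>\<^sup>+a. ennreal (pmf p x) * G a x \<partial>N \<partial>count_space UNIV)"
    using Fubini[OF m] by simp
  also have "\<dots> = (\<integral>\<^sup>+x. \<integral>\<^sup>+a. G a x \<partial>N \<partial>measure_pmf p)"
    using G by (simp add: nn_integral_cmult nn_integral_measure_pmf)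
  finally show ?thesis .
qed

section \<open>Chebyshev's association inequality\<close>

context prob_space
begin

lemma expectation_power_mult_le:
  fixes \<phi> :: "'a \<Rightarrow> real"
  assumes \<phi>: "\<phi> \<in> borel_measurable M" "\<And>x. x \<in> space M \<Longrightarrow> 0 \<le> \<phi> x \<and> \<phi> x \<le> 1"
  shows "expectation (\<lambda>x. \<phi> x ^ a) * expectation (\<lambda>x. \<phi> x ^ b) \<le> expectation (\<lambda>x. \<phi> x ^ (a + b))"
proof -
  let ?E = "\<lambda>n. expectation (\<lambda>x. \<phi> x ^ n)"
  have int: "integrable M (\<lambda>x. \<phi> x ^ n)" for n
    using \<phi> by (intro integrable_const_bound[where B=1]) (auto simp: power_le_one)
  define g where "g u v = (\<phi> u ^ a - \<phi> v ^ a) * (\<phi> u ^ b - \<phi> v ^ b)" for u v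
  \<comment> \<open>Both powers are nondecreasing on [0, 1], so the two factors of g have the same sign;
    integrating g over M \<Otimes> M gives twice the difference of the two sides.\<close>
  have g_nonneg: "0 \<le> g u v" if "u \<in> space M" "v \<in> space M" for u v
  proof (cases "\<phi> u \<le> \<phi> v")
    case True
    then show ?thesis
      using \<phi>(2) that unfolding g_def by (intro mult_nonpos_nonpos) (auto intro: power_mono)
  next
    case False
    then show ?thesis
      using \<phi>(2) that unfolding g_def by (intro mult_nonneg_nonneg) (auto intro: power_mono)
  qed
  have "expectation (g u) = \<phi> u ^ (a + b) + ?E (a + b) - (\<phi> u ^ a * ?E b + \<phi> u ^ b * ?E a)" for u
  proof -
    have "g u = (\<lambda>v. (\<phi> u ^ (a + b) + \<phi> v ^ (a + b)) - (\<phi> u ^ a * \<phi> v ^ b + \<phi> u ^ b * \<phi> v ^ a))"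
      unfolding g_def by (simp add: algebra_simps power_add)
    then show ?thesis using int by (simp add: prob_space)
  qed
  then have "expectation (\<lambda>u. expectation (g u)) = ?E (a + b) + ?E (a + b) - (?E a * ?E b + ?E b * ?E a)"
    using int by (simp add: prob_space)
  moreover have "0 \<le> expectation (\<lambda>u. expectation (g u))"
    using g_nonneg by (intro integral_nonneg_AE AE_I2 impI integral_nonneg_AE) auto
  ultimately show ?thesis by simp
qed

lemma prod_expectation_power_le:
  fixes \<phi> :: "'a \<Rightarrow> real"
  assumes \<phi>: "\<phi> \<in> borel_measurable M" "\<And>x. x \<in> space M \<Longrightarrow> 0 \<le> \<phi> x \<and> \<phi> x \<le> 1"
    and X: "finite X"
  shows "(\<Prod>x\<in>X. expectation (\<lambda>y. \<phi> y ^ c x)) \<le> expectation (\<lambda>y. \<phi> y ^ (\<Sum>x\<in>X. c x))"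
  using X
proof (induction X rule: finite_induct)
  case empty
  then show ?case by (simp add: prob_space)
next
  case (insert x X)
  have "(\<Prod>x\<in>insert x X. expectation (\<lambda>y. \<phi> y ^ c x))
      \<le> expectation (\<lambda>y. \<phi> y ^ c x) * expectation (\<lambda>y. \<phi> y ^ (\<Sum>x\<in>X. c x))"
    using insert \<phi>(2) by (auto intro!: mult_left_mono integral_nonneg_AE)
  also have "\<dots> \<le> expectation (\<lambda>y. \<phi> y ^ (c x + (\<Sum>x\<in>X. c x)))"
    by (rule expectation_power_mult_le[OF \<phi>])
  finally show ?case using insert by simp
qed

lemma nn_integral_eq_expectation_power:
  fixes \<phi> :: "'a \<Rightarrow> real"
  assumes \<phi>: "\<phi> \<in> borel_measurable M" "\<And>x. x \<in> space M \<Longrightarrow> 0 \<le> \<phi> x \<and> \<phi> x \<le> 1"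
  shows "(\<integral>\<^sup>+x. ennreal (\<phi> x ^ n) \<partial>M) = ennreal (expectation (\<lambda>x. \<phi> x ^ n))"
  using \<phi> by (intro nn_integral_eq_integral integrable_const_bound[where B=1] AE_I2)
    (auto simp: power_le_one)

end

lemma nn_integral_PiM_prod_list_le_power:
  fixes \<phi> :: "'a \<Rightarrow> real"
  assumes M: "prob_space M" and \<phi>: "\<phi> \<in> borel_measurable M" "\<And>x. 0 \<le> \<phi> x \<and> \<phi> x \<le> 1"
    and js: "set js \<subseteq> I" and j0: "j0 \<in> I"
  shows "(\<integral>\<^sup>+\<omega>. ennreal (\<Prod>j\<leftarrow>js. \<phi> (\<omega> j)) \<partial>PiM I (\<lambda>_. M))
    \<le> (\<integral>\<^sup>+\<omega>. ennreal (\<phi> (\<omega> j0) ^ length js) \<partial>PiM I (\<lambda>_. M))"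
proof -
  interpret prob_space M by fact
  let ?c = "count_list js" and ?E = "\<lambda>n. expectation (\<lambda>x. \<phi> x ^ n)"
  have E_nonneg: "0 \<le> ?E n" for n
    using \<phi>(2) by (intro integral_nonneg_AE) auto
  have "(\<integral>\<^sup>+\<omega>. ennreal (\<Prod>j\<leftarrow>js. \<phi> (\<omega> j)) \<partial>PiM I (\<lambda>_. M))
      = (\<integral>\<^sup>+\<omega>. (\<Prod>j\<in>set js. ennreal (\<phi> (\<omega> j) ^ ?c j)) \<partial>PiM I (\<lambda>_. M))"
    using \<phi>(2) by (simp add: prod_list_map_eq_prod_count prod_ennreal)
  also have "\<dots> = (\<Prod>j\<in>set js. \<integral>\<^sup>+x. ennreal (\<phi> x ^ ?c j) \<partial>M)"
    using M js \<phi>(1) by (intro nn_integral_PiM_prod) auto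
  also have "\<dots> = ennreal (\<Prod>j\<in>set js. ?E (?c j))"
    using \<phi> E_nonneg by (simp add: nn_integral_eq_expectation_power prod_ennreal)
  also have "\<dots> \<le> ennreal (?E (length js))"
    using prod_expectation_power_le[OF \<phi>(1), of "set js" ?c] \<phi>(2)
    by (simp add: sum_count_set ennreal_leI)
  also have "\<dots> = (\<integral>\<^sup>+\<omega>. (\<Prod>j\<in>{j0}. ennreal (\<phi> (\<omega> j) ^ length js)) \<partial>PiM I (\<lambda>_. M))"
    using M j0 \<phi> by (subst nn_integral_PiM_prod) (auto simp: nn_integral_eq_expectation_power)
  finally show ?thesis by simp
qed

section \<open>Probability generating functions\<close>

lemma summable_pgf:
  assumes "0 \<le> u" "u \<le> 1"
  shows "summable (\<lambda>k. u ^ k * pmf p k)"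
proof -
  have "(\<Sum>k. ennreal (u ^ k * pmf p k)) = (\<integral>\<^sup>+k. ennreal (u ^ k) \<partial>measure_pmf p)"
    using assms by (simp add: nn_integral_measure_pmf nn_integral_count_space_nat ennreal_mult' mult.commute)
  also have "\<dots> \<le> (\<integral>\<^sup>+k. 1 \<partial>measure_pmf p)"
    using assms by (intro nn_integral_mono) (simp add: power_le_one)
  finally have "(\<Sum>k. ennreal (u ^ k * pmf p k)) \<noteq> \<top>"
    by (auto simp: top_unique)
  then show ?thesis
    using assms by (intro summable_suminf_not_top) auto
qed

lemma nn_integral_pmf_power_eq_pgf:
  assumes "0 \<le> u" "u \<le> 1"
  shows "(\<integral>\<^sup>+k. ennreal (u ^ k) \<partial>measure_pmf p) = ennreal (pgf p u)"
proof -
  have "(\<integral>\<^sup>+k. ennreal (u ^ k) \<partial>measure_pmf p) = (\<Sum>k. ennreal (u ^ k * pmf p k))"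
    using assms by (simp add: nn_integral_measure_pmf nn_integral_count_space_nat ennreal_mult' mult.commute)
  also have "\<dots> = ennreal (pgf p u)"
    unfolding pgf_def using assms by (intro suminf_ennreal2 summable_pgf) auto
  finally show ?thesis .
qed

lemma pgf_nonneg: "0 \<le> u \<Longrightarrow> u \<le> 1 \<Longrightarrow> 0 \<le> pgf p u"
  unfolding pgf_def by (intro suminf_nonneg summable_pgf) auto

lemma pgf_le_1:
  assumes "0 \<le> u" "u \<le> 1"
  shows "pgf p u \<le> 1"
proof -
  have "ennreal (pgf p u) = (\<integral>\<^sup>+k. ennreal (u ^ k) \<partial>measure_pmf p)"
    using assms by (simp add: nn_integral_pmf_power_eq_pgf)
  also have "\<dots> \<le> (\<integral>\<^sup>+k. 1 \<partial>measure_pmf p)"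
    using assms by (intro nn_integral_mono) (simp add: power_le_one)
  finally show ?thesis by (simp add: ennreal_le_1)
qed

section \<open>The quenched process\<close>

lemma finite_nbrs [simp]: "finite (nbrs (x :: int ^ 'd::finite))"
proof -
  have "nbrs x = range (\<lambda>i. x + axis i 1) \<union> range (\<lambda>i. x - axis i 1)"
    unfolding nbrs_def by auto
  then show ?thesis by simp
qed

lemma nbrs_nonempty [simp]: "nbrs (x :: int ^ 'd::finite) \<noteq> {}"
  unfolding nbrs_def by auto

text \<open>P^q-expectation of the product of h over the children of a particle at (t, x), which jumps to
  a uniform neighbour y and splits there according to q(t, x).\<close>

definition step_gf :: "'d::finite env \<Rightarrow> nat \<Rightarrow> (int ^ 'd \<Rightarrow> real) \<Rightarrow> int ^ 'd \<Rightarrow> real" where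
  "step_gf q t h x = (\<Sum>y\<in>nbrs x. pgf (q (t, x)) (h y)) / card (nbrs x)"

lemma step_gf_bounds:
  assumes "\<And>y. 0 \<le> h y \<and> h y \<le> 1"
  shows "0 \<le> step_gf q t h x \<and> step_gf q t h x \<le> 1"
proof -
  have "(\<Sum>y\<in>nbrs x. pgf (q (t, x)) (h y)) \<le> card (nbrs x)"
    using assms sum_mono[of "nbrs x" "\<lambda>y. pgf (q (t, x)) (h y)" "\<lambda>_. 1"] by (simp add: pgf_le_1)
  moreover have "0 \<le> (\<Sum>y\<in>nbrs x. pgf (q (t, x)) (h y))"
    using assms by (intro sum_nonneg pgf_nonneg) auto
  ultimately show ?thesis
    unfolding step_gf_def by (simp add: card_gt_0_iff divide_le_eq)
qed

lemma step_gf_const: "step_gf q t (\<lambda>_. s) x = pgf (q (t, x)) s"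
  unfolding step_gf_def by (simp add: card_gt_0_iff)

lemma nn_integral_brw_step:
  assumes h: "\<And>y. 0 \<le> h y \<and> h y \<le> 1"
  shows "(\<integral>\<^sup>+ys. ennreal (\<Prod>y\<leftarrow>ys. h y) \<partial>brw_step q t xs) = ennreal (\<Prod>x\<leftarrow>xs. step_gf q t h x)"
proof (induction xs)
  case Nil
  then show ?case by simp
next
  case (Cons x xs)
  have h_prod: "0 \<le> (\<Prod>y\<leftarrow>ys. h y)" for ys
    using h by (intro prod_list_nonneg) auto
  have step_prod: "0 \<le> (\<Prod>x\<leftarrow>xs. step_gf q t h x)"
    using step_gf_bounds[of h, OF h] by (intro prod_list_nonneg) auto
  have pgf_avg: "(\<integral>\<^sup>+y. ennreal (pgf (q (t, x)) (h y)) \<partial>pmf_of_set (nbrs x)) = ennreal (step_gf q t h x)"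
    using h by (simp add: nn_integral_pmf_of_set step_gf_def ennreal_of_nat_eq_real_of_nat divide_ennreal
        sum_nonneg pgf_nonneg card_gt_0_iff)
  have "(\<integral>\<^sup>+ys. ennreal (\<Prod>y\<leftarrow>ys. h y) \<partial>brw_step q t (x # xs))
      = (\<integral>\<^sup>+y. \<integral>\<^sup>+k. ennreal (h y ^ k) * (\<integral>\<^sup>+ys. ennreal (\<Prod>y\<leftarrow>ys. h y) \<partial>brw_step q t xs)
          \<partial>q (t, x) \<partial>pmf_of_set (nbrs x))"
    using h h_prod by (simp add: ennreal_mult nn_integral_cmult)
  also have "\<dots> = (\<integral>\<^sup>+y. ennreal (pgf (q (t, x)) (h y)) \<partial>pmf_of_set (nbrs x)) * ennreal (\<Prod>x\<leftarrow>xs. step_gf q t h x)"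
    using h by (simp add: Cons.IH nn_integral_multc nn_integral_pmf_power_eq_pgf)
  also have "\<dots> = ennreal (\<Prod>x\<leftarrow>x # xs. step_gf q t h x)"
    using step_gf_bounds[of h, OF h] step_prod by (simp add: pgf_avg ennreal_mult)
  finally show ?case .
qed

text \<open>Iterating step_gf backwards in time gives a closed formula for the quenched generating
  functional of B_t; its only use is to see that it is measurable in the environment.\<close>

fun iter_gf :: "'d::finite env \<Rightarrow> nat \<Rightarrow> (int ^ 'd \<Rightarrow> real) \<Rightarrow> int ^ 'd \<Rightarrow> real" where
  "iter_gf q 0 h = h"
| "iter_gf q (Suc t) h = iter_gf q t (step_gf q t h)"

lemma iter_gf_bounds: "(\<And>y. 0 \<le> h y \<and> h y \<le> 1) \<Longrightarrow> 0 \<le> iter_gf q t h x \<and> iter_gf q t h x \<le> 1"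
  by (induction t arbitrary: h) (auto simp: step_gf_bounds)

lemma nn_integral_brw_prod_list:
  assumes "\<And>y. 0 \<le> h y \<and> h y \<le> 1"
  shows "(\<integral>\<^sup>+xs. ennreal (\<Prod>x\<leftarrow>xs. h x) \<partial>brw q t) = ennreal (iter_gf q t h 0)"
  using assms
proof (induction t arbitrary: h)
  case 0
  then show ?case by simp
next
  case (Suc t)
  then show ?case
    by (simp add: nn_integral_bind_pmf nn_integral_brw_step step_gf_bounds)
qed

lemma brw_gf_eq_nn_integral:
  assumes "0 \<le> s" "s \<le> 1"
  shows "ennreal (brw_gf q t s) = (\<integral>\<^sup>+xs. ennreal (s ^ length xs) \<partial>brw q t)"
  unfolding brw_gf_def using assms
  by (intro nn_integral_eq_integral[symmetric] measure_pmf.integrable_const_bound[where B=1])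
    (auto simp: power_le_one)

lemma brw_gf_eq_iter_gf:
  assumes "0 \<le> s" "s \<le> 1"
  shows "brw_gf q t s = iter_gf q t (\<lambda>_. s) 0"
proof -
  have "ennreal (brw_gf q t s) = ennreal (iter_gf q t (\<lambda>_. s) 0)"
    using assms by (simp add: brw_gf_eq_nn_integral map_replicate_const flip: nn_integral_brw_prod_list)
  moreover have "0 \<le> brw_gf q t s"
    unfolding brw_gf_def using assms by (intro integral_nonneg_AE) auto
  ultimately show ?thesis
    using iter_gf_bounds[of "\<lambda>_. s" q t 0] assms by simp
qed

lemma brw_gf_Suc:
  assumes "0 \<le> s" "s \<le> 1"
  shows "ennreal (brw_gf q (Suc t) s) = (\<integral>\<^sup>+xs. ennreal (\<Prod>x\<leftarrow>xs. pgf (q (t, x)) s) \<partial>brw q t)"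
  using assms nn_integral_brw_step[of "\<lambda>_. s" q t]
  by (simp add: brw_gf_eq_nn_integral nn_integral_bind_pmf step_gf_const map_replicate_const)

lemma brw_step_cong: "(\<And>x. q (t, x) = q' (t, x)) \<Longrightarrow> brw_step q t xs = brw_step q' t xs"
  by (induction xs) auto

lemma brw_cong: "(\<And>i x. i < t \<Longrightarrow> q (i, x) = q' (i, x)) \<Longrightarrow> brw q t = brw q' t"
proof (induction t)
  case (Suc t)
  then have "brw q t = brw q' t" by auto
  moreover have "brw_step q t = brw_step q' t"
    using Suc.prems by (intro ext brw_step_cong) auto
  ultimately show ?case by simp
qed simp

lemma brw_gf_cong: "(\<And>i x. i < t \<Longrightarrow> q (i, x) = q' (i, x)) \<Longrightarrow> brw_gf q t s = brw_gf q' t s"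
  unfolding brw_gf_def by (metis brw_cong)

lemma pgf_comp_Suc: "pgf_comp q (Suc t) s = pgf_comp q t (pgf (q (t, 0)) s)"
  unfolding pgf_comp_def by simp

lemma pgf_comp_cong: "(\<And>i. i < t \<Longrightarrow> q (i, 0) = q' (i, 0)) \<Longrightarrow> pgf_comp q t s = pgf_comp q' t s"
  by (induction t arbitrary: s) (simp_all add: pgf_comp_Suc, simp add: pgf_comp_def)

section \<open>Averaging over the environment\<close>

locale iid_env =
  fixes \<mu> :: "nat pmf measure"
  assumes prob_space: "prob_space \<mu>"
    and measurable_pmf: "\<And>k. (\<lambda>p. pmf p k) \<in> borel_measurable \<mu>"
begin

abbreviation Q :: "'d::finite env measure" where
  "Q \<equiv> PiM UNIV (\<lambda>_. \<mu>)"

lemma measurable_pgf [measurable]: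
  assumes "g \<in> N \<rightarrow>\<^sub>M \<mu>" "u \<in> borel_measurable N"
  shows "(\<lambda>x. pgf (g x) (u x)) \<in> borel_measurable N"
proof -
  have "(\<lambda>x. pmf (g x) k) \<in> borel_measurable N" for k
    using measurable_compose[OF assms(1) measurable_pmf] by simp
  then show ?thesis unfolding pgf_def using assms(2) by measurable
qed

lemma measurable_iter_gf:
  assumes "\<And>y. (\<lambda>q. h q y) \<in> borel_measurable Q"
  shows "(\<lambda>q. iter_gf q t (h q) x) \<in> borel_measurable Q"
  using assms
proof (induction t arbitrary: h)
  case (Suc t)
  have "(\<lambda>q. step_gf q t (h q) x) \<in> borel_measurable Q" for x
    unfolding step_gf_def using Suc.prems by measurable
  then show ?case using Suc.IH by simp
qed simp

lemma measurable_brw_gf: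
  assumes "u \<in> borel_measurable Q" "\<And>q. 0 \<le> u q \<and> u q \<le> 1"
  shows "(\<lambda>q. brw_gf q t (u q)) \<in> borel_measurable Q"
  using measurable_iter_gf[of "\<lambda>q _. u q"] assms by (simp add: brw_gf_eq_iter_gf)

lemma measurable_pgf_comp:
  assumes "u \<in> borel_measurable Q"
  shows "(\<lambda>q. pgf_comp q t (u q)) \<in> borel_measurable Q"
  using assms
proof (induction t arbitrary: u)
  case (Suc t)
  then show ?case by (simp add: pgf_comp_Suc)
qed (simp add: pgf_comp_def)


lemma nn_integral_brw_gf_Suc_le:
  assumes s: "0 \<le> s" "s \<le> 1"
  shows "(\<integral>\<^sup>+q. ennreal (brw_gf (q :: 'd::finite env) (Suc t) s) \<partial>Q)
    \<le> (\<integral>\<^sup>+q. ennreal (brw_gf (q :: 'd env) t (pgf (q (t, 0)) s)) \<partial>Q)"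
proof -
  let ?Q = "Q :: 'd env measure"
  define S :: "(nat \<times> (int ^ 'd)) set" where "S = {j. fst j = t}"
  define R :: "(nat \<times> (int ^ 'd)) set" where "R = {j. fst j \<noteq> t}"
  define \<phi> where "\<phi> p = pgf p s" for p
  let ?PS = "PiM S (\<lambda>_. \<mu>) :: 'd env measure" and ?PR = "PiM R (\<lambda>_. \<mu>) :: 'd env measure"
  have SR: "S \<inter> R = {}" "S \<union> R = UNIV"
    unfolding S_def R_def by auto
  have merge_S: "merge S R (a, b) (t, x) = a (t, x)" for a b x
    by (simp add: merge_def S_def)
  have brw_merge: "brw (merge S R (a, b)) t = brw b t" for a b
    by (intro brw_cong) (simp add: merge_def S_def R_def)
  have \<phi>: "\<phi> \<in> borel_measurable \<mu>" "\<And>p. 0 \<le> \<phi> p \<and> \<phi> p \<le> 1"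
    unfolding \<phi>_def using s by (auto simp: pgf_nonneg pgf_le_1)
  have PS: "sigma_finite_measure ?PS"
    using prob_space by (intro prob_space_imp_sigma_finite prob_space_PiM)
  have split: "(\<integral>\<^sup>+q. ennreal (brw_gf q t' (u q)) \<partial>?Q)
      = (\<integral>\<^sup>+b. \<integral>\<^sup>+a. ennreal (brw_gf (merge S R (a, b)) t' (u (merge S R (a, b)))) \<partial>?PS \<partial>?PR)"
    if "u \<in> borel_measurable ?Q" "\<And>q. 0 \<le> u q \<and> u q \<le> 1" for u t'
    using prob_space measurable_brw_gf[OF that] by (intro nn_integral_PiM_merge(2)[OF _ SR]) auto
  have "(\<integral>\<^sup>+q. ennreal (brw_gf q (Suc t) s) \<partial>?Q)
      = (\<integral>\<^sup>+b. \<integral>\<^sup>+a. ennreal (brw_gf (merge S R (a, b)) (Suc t) s) \<partial>?PS \<partial>?PR)"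
    using split[of "\<lambda>_. s" "Suc t"] s by simp
  \<comment> \<open>Layer t of the environment is independent of the population B_t.\<close>
  also have "\<dots> = (\<integral>\<^sup>+b. \<integral>\<^sup>+a. \<integral>\<^sup>+xs. ennreal (\<Prod>x\<leftarrow>xs. \<phi> (a (t, x))) \<partial>brw b t \<partial>?PS \<partial>?PR)"
    using s by (simp add: brw_gf_Suc merge_S brw_merge \<phi>_def)
  also have "\<dots> = (\<integral>\<^sup>+b. \<integral>\<^sup>+xs. \<integral>\<^sup>+a. ennreal (\<Prod>x\<leftarrow>xs. \<phi> (a (t, x))) \<partial>?PS \<partial>brw b t \<partial>?PR)"
    using \<phi>(1) by (intro nn_integral_cong nn_integral_measure_pmf_swap PS) (simp add: S_def)
  also have "\<dots> \<le> (\<integral>\<^sup>+b. \<integral>\<^sup>+xs. \<integral>\<^sup>+a. ennreal (\<phi> (a (t, 0)) ^ length xs) \<partial>?PS \<partial>brw b t \<partial>?PR)"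
  proof (rule nn_integral_mono, rule nn_integral_mono)
    show "(\<integral>\<^sup>+a. ennreal (\<Prod>x\<leftarrow>xs. \<phi> (a (t, x))) \<partial>?PS) \<le> (\<integral>\<^sup>+a. ennreal (\<phi> (a (t, 0)) ^ length xs) \<partial>?PS)"
      for xs
      using nn_integral_PiM_prod_list_le_power[OF prob_space \<phi>, of "map (Pair t) xs" S "(t, 0)"]
      by (simp add: S_def comp_def image_subset_iff)
  qed
  also have "\<dots> = (\<integral>\<^sup>+b. \<integral>\<^sup>+a. \<integral>\<^sup>+xs. ennreal (\<phi> (a (t, 0)) ^ length xs) \<partial>brw b t \<partial>?PS \<partial>?PR)"
    using \<phi>(1) by (intro nn_integral_cong nn_integral_measure_pmf_swap[symmetric] PS) (simp add: S_def)
  also have "\<dots> = (\<integral>\<^sup>+b. \<integral>\<^sup>+a. ennreal (brw_gf (merge S R (a, b)) t (\<phi> (merge S R (a, b) (t, 0)))) \<partial>?PS \<partial>?PR)"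
    using \<phi>(2) by (simp add: brw_gf_eq_nn_integral merge_S brw_merge)
  also have "\<dots> = (\<integral>\<^sup>+q. ennreal (brw_gf q t (\<phi> (q (t, 0)))) \<partial>?Q)"
    using split[of "\<lambda>q. \<phi> (q (t, 0))" t] \<phi> by simp
  finally show ?thesis
    by (simp add: \<phi>_def)
qed

lemma nn_integral_brw_gf_le_pgf_comp:
  assumes "0 \<le> s" "s \<le> 1"
  shows "(\<integral>\<^sup>+q. ennreal (brw_gf (q :: 'd::finite env) t s) \<partial>Q)
    \<le> (\<integral>\<^sup>+q. ennreal (pgf_comp (q :: 'd env) t s) \<partial>Q)"
  using assms
proof (induction t arbitrary: s)
  case 0
  then show ?case by (simp add: brw_gf_def pgf_comp_def)
next
  case (Suc t)
  let ?Q = "Q :: 'd env measure"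
  let ?w = "\<lambda>q :: 'd env. pgf (q (t, 0)) s"
  have w: "?w \<in> borel_measurable ?Q" "\<And>q. 0 \<le> ?w q \<and> ?w q \<le> 1"
    using Suc.prems by (auto simp: pgf_nonneg pgf_le_1)
  have brw_gf_meas: "(\<lambda>q. ennreal (brw_gf q t (u q))) \<in> borel_measurable ?Q"
    if "u \<in> borel_measurable ?Q" "\<And>q. 0 \<le> u q \<and> u q \<le> 1" for u
    using measurable_brw_gf[OF that] by measurable
  have pgf_comp_meas: "(\<lambda>q. ennreal (pgf_comp q t (u q))) \<in> borel_measurable ?Q"
    if "u \<in> borel_measurable ?Q" for u
    using measurable_pgf_comp[OF that] by measurable
  have meas_w: "(\<lambda>q. ennreal (brw_gf q t (?w q))) \<in> borel_measurable ?Q"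
    "(\<lambda>q. ennreal (pgf_comp q t (?w q))) \<in> borel_measurable ?Q"
    using brw_gf_meas[of ?w] pgf_comp_meas[of ?w] w by auto
  have meas_const: "(\<lambda>q. ennreal (brw_gf q t v)) \<in> borel_measurable ?Q"
    "(\<lambda>q. ennreal (pgf_comp q t v)) \<in> borel_measurable ?Q" if "v \<in> {0..1}" for v
    using brw_gf_meas[of "\<lambda>_. v"] pgf_comp_meas[of "\<lambda>_. v"] that by auto
  have "(\<integral>\<^sup>+q. ennreal (brw_gf q (Suc t) s) \<partial>?Q) \<le> (\<integral>\<^sup>+q. ennreal (brw_gf q t (?w q)) \<partial>?Q)"
    using Suc.prems by (rule nn_integral_brw_gf_Suc_le)
  \<comment> \<open>The environment before time t is independent of layer t, which determines ?w.\<close>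
  also have "\<dots> \<le> (\<integral>\<^sup>+q. ennreal (pgf_comp q t (?w q)) \<partial>?Q)"
  proof (rule nn_integral_PiM_mono_indep_param[where S="{j. fst j = t}" and R="{j. fst j \<noteq> t}"
        and f="\<lambda>q v. ennreal (brw_gf q t v)" and g="\<lambda>q v. ennreal (pgf_comp q t v)" and W="{0..1}"])
    fix q q' :: "'d env" and v :: real
    assume "\<And>j. j \<in> {j. fst j \<noteq> t} \<Longrightarrow> q j = q' j"
    then have "\<And>i x. i < t \<Longrightarrow> q (i, x) = q' (i, x)"
      by simp
    then show "ennreal (brw_gf q t v) = ennreal (brw_gf q' t v)"
      and "ennreal (pgf_comp q t v) = ennreal (pgf_comp q' t v)"
      by (metis brw_gf_cong, metis pgf_comp_cong)
  qed (use prob_space w Suc.IH meas_w meas_const in auto)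
  also have "\<dots> = (\<integral>\<^sup>+q. ennreal (pgf_comp q (Suc t) s) \<partial>?Q)"
    by (simp add: pgf_comp_Suc)
  finally show ?case .
qed

end

theorem lemma4p6p4:
  fixes \<mu> :: "nat pmf measure" and s :: real and t :: nat
  assumes "prob_space \<mu>"
    and "space \<mu> = UNIV"
    and "\<And>k. (\<lambda>p. pmf p k) \<in> borel_measurable \<mu>"
    and "0 \<le> s" and "s \<le> 1" and "1 \<le> t"
  shows "(\<integral>\<^sup>+ q. ennreal (brw_gf (q :: ('d::finite) env) t s) \<partial>(PiM UNIV (\<lambda>_. \<mu>)))
       \<le> (\<integral>\<^sup>+ q. ennreal (pgf_comp (q :: 'd env) t s) \<partial>(PiM UNIV (\<lambda>_. \<mu>)))"
proof -
  interpret iid_env \<mu>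
    using assms(1,3) by (rule iid_env.intro)
  show ?thesis
    using nn_integral_brw_gf_le_pgf_comp assms(4,5) .
qed

end
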